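(* Let $\mathbf{K}$ be a finite field of characteristic $p>3$, let $(\alpha,\beta)\in\mathbf{K}^2$, let $G\in\mathbf{K}[[x]]$ be a formal power series and $H\in\mathbf{K}[z]$ a polynomial such that $H(\alpha)=1$ and $\beta^2=G(0)\neq 0$. Let $\mu\in\{1,\dots,p\}$. Then the following algorithm, on input $(\mu,(\alpha,\beta),H,G)$, returns the Taylor series modulo $x^\mu$ of the solution $S$ of the differential equation $$S'(x)^2=G(x)\,H(S(x)),\qquad S(0)=\alpha,\qquad S'(0)=\beta.$$ Algorithm: set $d\leftarrow 2$, $U\leftarrow 1/\beta$, $J\leftarrow 1$, $V\leftarrow 1$, and $S\leftarrow \alpha+\beta x+\big[(G'(0)+H'(\alpha)\beta^3)/(4\beta)\big]x^2$. While $d<\mu-1$, perform in order: $U\leftarrow U\cdot(2-S'\cdot U)\bmod x^d$; $V\leftarrow \big(V+J\cdot(H\circ S)\cdot(2-V\cdot J)\big)/2\bmod x^d$; $J\leftarrow J\cdot(2-V\cdot J)\bmod x^d$; $S\leftarrow S+V\cdot\int\big(G\cdot(H\circ S)-S'^2\big)\,\big(U\cdot J/2\big)\,dx\bmod x^{\min(2d+1,\mu)}$; $d\leftarrow 2d$. Finally return $S$.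
   Context: Here $'$ denotes the formal derivative with respect to $x$ (for $H$, with respect to $z$), $H\circ S$ is the composition $H(S(x))$, and $\int F\,dx$ denotes the formal antiderivative with zero constant term, $\int\sum_i c_i x^i\,dx=\sum_i \frac{c_i}{i+1}x^{i+1}$. All operations are on truncated power series over $\mathbf{K}$. *)

theory Defs
  imports "HOL-Computational_Algebra.Computational_Algebra" "HOL-Library.While_Combinator"
begin

text \<open>Composition H o S of a polynomial H with a power series S (S(0) arbitrary):
  evaluate H at S in the power series ring.\<close>
definition poly_comp_fps :: "'a::comm_ring_1 poly \<Rightarrow> 'a fps \<Rightarrow> 'a fps" where
  "poly_comp_fps H S = poly (map_poly fps_const H) S"

text \<open>Loop state: (d, U, J, V, S).\<close>
type_synonym 'a alg_state = "nat \<times> 'a fps \<times> 'a fps \<times> 'a fps \<times> 'a fps"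

definition alg_init :: "'a::field \<Rightarrow> 'a \<Rightarrow> 'a poly \<Rightarrow> 'a fps \<Rightarrow> 'a alg_state" where
  "alg_init \<alpha> \<beta> H G =
     (2, fps_const (1 / \<beta>), 1, 1,
      fps_const \<alpha> + fps_const \<beta> * fps_X
      + fps_const ((fps_deriv G $ 0 + poly (pderiv H) \<alpha> * \<beta> ^ 3) / (4 * \<beta>)) * fps_X ^ 2)"

definition alg_step :: "nat \<Rightarrow> 'a::field poly \<Rightarrow> 'a fps \<Rightarrow> 'a alg_state \<Rightarrow> 'a alg_state" where
  "alg_step \<mu> H G st =
     (case st of (d, U, J, V, S) \<Rightarrow>
       let U' = fps_cutoff d (U * (2 - fps_deriv S * U));
           V' = fps_cutoff d (fps_const (1/2) * (V + J * poly_comp_fps H S * (2 - V * J)));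
           J' = fps_cutoff d (J * (2 - V' * J));
           S' = fps_cutoff (min (2 * d + 1) \<mu>)
                  (S + V' * fps_integral
                      ((G * poly_comp_fps H S - (fps_deriv S)\<^sup>2) * (fps_const (1/2) * U' * J')) 0)
       in (2 * d, U', J', V', S'))"

definition alg :: "nat \<Rightarrow> 'a::field \<Rightarrow> 'a \<Rightarrow> 'a poly \<Rightarrow> 'a fps \<Rightarrow> 'a fps" where
  "alg \<mu> \<alpha> \<beta> H G =
     snd (snd (snd (snd (while (\<lambda>st. fst st < \<mu> - 1) (alg_step \<mu> H G) (alg_init \<alpha> \<beta> H G)))))"

text \<open>S solves S'^2 = G * (H o S), S(0)=alpha, S'(0)=beta, modulo x^(mu-1)
  (the equation for S' up to the precision that determines S modulo x^mu).\<close>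
definition ode_sol_mod :: "nat \<Rightarrow> 'a::field \<Rightarrow> 'a \<Rightarrow> 'a poly \<Rightarrow> 'a fps \<Rightarrow> 'a fps \<Rightarrow> bool" where
  "ode_sol_mod \<mu> \<alpha> \<beta> H G S \<longleftrightarrow>
     S $ 0 = \<alpha> \<and> fps_deriv S $ 0 = \<beta> \<and>
     fps_cutoff (\<mu> - 1) ((fps_deriv S)\<^sup>2) = fps_cutoff (\<mu> - 1) (G * poly_comp_fps H S)"

end

theory Submission
  imports Defs
begin

text \<open>
  Write R(S) = S'^2 - G * (H o S). The loop keeps R(S) = 0 mod x^min(d, mu - 1), and U, V, J
  equal to 1/S', sqrt(H o S), 1/sqrt(H o S) modulo x^(d/2). A Newton step doubles the precision
  of U, V, J. Because V then nearly solves the linearised homogeneous equation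
  2 S' y' = G * (H' o S) * y, the variation-of-constants correction delta = V * int(-R(S) U J / 2)
  cancels the first-order part of R(S + delta), which therefore vanishes modulo x^(2d); the
  integration only divides by numbers below 2d < char K.
  Uniqueness modulo x^mu: for two solutions S and T, the product (S' + T') (S - T)' vanishes to
  the order to which S - T does, and S' + T' is a unit since 2 beta is nonzero, so each further
  coefficient of S - T is forced, again dividing only by a number below char K.
\<close>

section \<open>Congruences modulo powers of x\<close>

text \<open>Congruence modulo \<open>x\<^sup>n\<close> is expressed as divisibility by \<open>fps_X ^ n\<close>.\<close>

lemma fps_X_power_dvd_iff:
  "fps_X ^ n dvd (f :: 'a::comm_ring_1 fps) \<longleftrightarrow> (\<forall>i<n. f $ i = 0)"
proof
  assume "fps_X ^ n dvd f"
  then obtain g where "f = fps_X ^ n * g" by (rule dvdE)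
  then show "\<forall>i<n. f $ i = 0" by (simp add: fps_X_power_mult_nth)
next
  assume "\<forall>i<n. f $ i = 0"
  then have "f = fps_shift n f * fps_X ^ n"
    by (intro fps_ext) (simp add: fps_X_power_mult_right_nth)
  then show "fps_X ^ n dvd f" by (metis dvd_triv_right)
qed

lemma fps_cutoff_eq_iff_fps_X_power_dvd:
  "fps_cutoff n f = fps_cutoff n g \<longleftrightarrow> fps_X ^ n dvd (f - g :: 'a::comm_ring_1 fps)"
  by (simp add: fps_cutoff_eq_fps_cutoff_iff fps_X_power_dvd_iff)

lemma fps_X_power_dvd_cutoff_diff: "fps_X ^ n dvd (fps_cutoff n f - f :: 'a::comm_ring_1 fps)"
  by (simp add: fps_X_power_dvd_iff)

lemma fps_X_power_dvd_mono: "fps_X ^ n dvd f \<Longrightarrow> m \<le> n \<Longrightarrow> fps_X ^ m dvd f"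
  by (metis le_imp_power_dvd dvd_trans)

lemma fps_X_power_dvd_mult:
  "fps_X ^ m dvd f \<Longrightarrow> fps_X ^ n dvd g \<Longrightarrow> fps_X ^ (m + n) dvd f * g"
  by (simp add: power_add mult_dvd_mono)

lemma fps_X_power_dvd_mult_mono:
  "fps_X ^ m dvd f \<Longrightarrow> fps_X ^ n dvd g \<Longrightarrow> k \<le> m + n \<Longrightarrow> fps_X ^ k dvd f * g"
  using fps_X_power_dvd_mult fps_X_power_dvd_mono by blast

lemma fps_X_power_dvd_deriv:
  "fps_X ^ Suc n dvd (f :: 'a::comm_ring_1 fps) \<Longrightarrow> fps_X ^ n dvd fps_deriv f"
  unfolding fps_X_power_dvd_iff by simp

lemma fps_X_power_dvd_integral:
  "fps_X ^ n dvd (f :: 'a::field fps) \<Longrightarrow> fps_X ^ Suc n dvd fps_integral f 0"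
  unfolding fps_X_power_dvd_iff by (auto simp: less_Suc_eq_0_disj)

lemma of_nat_neq_0_below_CHAR:
  "0 < n \<Longrightarrow> n < CHAR('a::semiring_1) \<or> CHAR('a) = 0 \<Longrightarrow> (of_nat n :: 'a) \<noteq> 0"
  by (auto simp: of_nat_eq_0_iff_char_dvd dest: dvd_imp_le)

lemma fps_X_power_dvd_deriv_integral_diff:
  fixes f :: "'a::field fps"
  assumes "n < CHAR('a) \<or> CHAR('a) = 0"
  shows "fps_X ^ n dvd fps_deriv (fps_integral f 0) - f"
proof -
  have "(of_nat (Suc i) :: 'a) \<noteq> 0" if "i < n" for i
    using of_nat_neq_0_below_CHAR[of "Suc i"] assms that by auto
  then show ?thesis by (simp add: fps_X_power_dvd_iff)
qed

lemma fps_X_power_Suc_dvd_of_deriv: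
  fixes f :: "'a::idom fps"
  assumes "fps_X ^ n dvd fps_deriv f" "f $ 0 = 0" "n < CHAR('a) \<or> CHAR('a) = 0"
  shows "fps_X ^ Suc n dvd f"
  unfolding fps_X_power_dvd_iff
proof (intro allI impI)
  fix i assume "i < Suc n"
  show "f $ i = 0"
  proof (cases i)
    case (Suc j)
    with \<open>i < Suc n\<close> assms(1) have "of_nat (Suc j) * f $ Suc j = 0"
      by (simp add: fps_X_power_dvd_iff)
    moreover have "(of_nat (Suc j) :: 'a) \<noteq> 0"
      using of_nat_neq_0_below_CHAR[of "Suc j"] assms(3) \<open>i < Suc n\<close> Suc by auto
    ultimately show ?thesis using Suc by simp
  qed (use assms(2) in simp)
qed

section \<open>Composition of a polynomial with a power series\<close>

lemma poly_comp_fps_0 [simp]: "poly_comp_fps 0 S = 0"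
  by (simp add: poly_comp_fps_def)

lemma poly_comp_fps_pCons:
  "poly_comp_fps (pCons c p) S = fps_const c + S * poly_comp_fps p S"
  by (simp add: poly_comp_fps_def map_poly_pCons)

lemma poly_comp_fps_add:
  "poly_comp_fps (p + q) S = poly_comp_fps p S + poly_comp_fps q S"
proof -
  have "map_poly fps_const (p + q) = map_poly fps_const p + map_poly fps_const q"
    by (rule poly_eqI) (simp add: coeff_map_poly)
  then show ?thesis by (simp add: poly_comp_fps_def)
qed

lemma poly_comp_fps_nth_0: "poly_comp_fps H S $ 0 = poly H (S $ 0)"
  by (induction H) (simp_all add: poly_comp_fps_pCons)

lemma fps_deriv_poly_comp_fps:
  fixes S :: "'a::idom fps"
  shows "fps_deriv (poly_comp_fps H S) = poly_comp_fps (pderiv H) S * fps_deriv S"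
  by (induction H)
     (simp_all add: poly_comp_fps_pCons pderiv_pCons poly_comp_fps_add algebra_simps)

lemma poly_comp_fps_taylor2:
  fixes S :: "'a::idom fps"
  shows "\<exists>Q. poly_comp_fps H (S + e) = poly_comp_fps H S + poly_comp_fps (pderiv H) S * e + e\<^sup>2 * Q"
proof (induction H)
  case (pCons c p)
  then obtain Q where
    "poly_comp_fps p (S + e) = poly_comp_fps p S + poly_comp_fps (pderiv p) S * e + e\<^sup>2 * Q"
    by blast
  then show ?case
    by (intro exI[of _ "S * Q + poly_comp_fps (pderiv p) S + e * Q"])
       (simp add: poly_comp_fps_pCons pderiv_pCons poly_comp_fps_add algebra_simps power2_eq_square)
qed simp

lemma poly_comp_fps_diff_dvd:
  fixes S :: "'a::idom fps"
  shows "S - T dvd poly_comp_fps H S - poly_comp_fps H T"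
proof -
  obtain Q where "poly_comp_fps H (T + (S - T)) =
      poly_comp_fps H T + poly_comp_fps (pderiv H) T * (S - T) + (S - T)\<^sup>2 * Q"
    using poly_comp_fps_taylor2 by blast
  then have "poly_comp_fps H S - poly_comp_fps H T = (S - T) * (poly_comp_fps (pderiv H) T + (S - T) * Q)"
    by (simp add: algebra_simps power2_eq_square)
  then show ?thesis by simp
qed

section \<open>Newton iterations for inverses and square roots\<close>

lemma newton_inverse_step:
  fixes a u :: "'a::comm_ring_1"
  assumes "q dvd a * u - 1"
  shows "q\<^sup>2 dvd a * (u * (2 - a * u)) - 1"
proof -
  have "a * (u * (2 - a * u)) - 1 = - (a * u - 1)\<^sup>2"
    by (simp add: algebra_simps power2_eq_square)
  then show ?thesis using dvd_power_same[OF assms, of 2] by simp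
qed

lemma newton_sqrt_step:
  fixes v j h :: "'a::comm_ring_1"
  assumes vj: "q dvd v * j - 1" and vh: "q dvd v\<^sup>2 - h"
  shows "q\<^sup>2 dvd v\<^sup>2 * ((v + j * h * (2 - v * j))\<^sup>2 - 4 * h)"
    and "q dvd (v + j * h * (2 - v * j)) - 2 * v"
proof -
  define e where "e = 1 - v * j"
  have e: "q\<^sup>2 dvd e\<^sup>2" using dvd_power_same[OF vj, of 2] by (simp add: e_def power2_commute)
  have "v\<^sup>2 * ((v + j * h * (2 - v * j))\<^sup>2 - 4 * h) =
      (v\<^sup>2 - h)\<^sup>2 - 2 * (v\<^sup>2 + h) * h * e\<^sup>2 + h\<^sup>2 * e\<^sup>2 * e\<^sup>2"
    by (simp add: e_def algebra_simps power2_eq_square)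
  then show "q\<^sup>2 dvd v\<^sup>2 * ((v + j * h * (2 - v * j))\<^sup>2 - 4 * h)"
    using dvd_power_same[OF vh, of 2] e by simp
  have "(v + j * h * (2 - v * j)) - 2 * v = j * (2 - v * j) * (h - v\<^sup>2) - v * (v * j - 1)\<^sup>2"
    by (simp add: algebra_simps power2_eq_square)
  moreover have "q dvd h - v\<^sup>2" using vh by (metis dvd_minus_iff minus_diff_eq)
  moreover have "q dvd (v * j - 1)\<^sup>2" using vj by (simp add: power2_eq_square)
  ultimately show "q dvd (v + j * h * (2 - v * j)) - 2 * v"
    by (metis dvd_diff dvd_mult)
qed

lemma newton_inverse_fps_cutoff:
  fixes a u :: "'a::comm_ring_1 fps"
  assumes "fps_X ^ m dvd a * u - 1"
  shows "fps_X ^ (2 * m) dvd a * fps_cutoff (2 * m) (u * (2 - a * u)) - 1"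
proof -
  have "fps_X ^ (2 * m) dvd a * (u * (2 - a * u)) - 1"
    using newton_inverse_step[OF assms] by (simp add: power_mult mult.commute)
  moreover have "a * fps_cutoff (2 * m) (u * (2 - a * u)) - 1 =
      a * (fps_cutoff (2 * m) (u * (2 - a * u)) - u * (2 - a * u)) + (a * (u * (2 - a * u)) - 1)"
    by (simp add: algebra_simps)
  ultimately show ?thesis by (metis dvd_add dvd_mult fps_X_power_dvd_cutoff_diff)
qed

lemma newton_sqrt_fps_cutoff:
  fixes V J h :: "'a::field fps"
  assumes two: "(2::'a) \<noteq> 0" and V0: "V $ 0 \<noteq> 0"
    and VJ: "fps_X ^ m dvd V * J - 1" and Vh: "fps_X ^ m dvd V\<^sup>2 - h"
  defines "V' \<equiv> fps_cutoff (2 * m) (fps_const (1/2) * (V + J * h * (2 - V * J)))"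
  shows "fps_X ^ (2 * m) dvd V'\<^sup>2 - h" and "fps_X ^ m dvd V' - V"
proof -
  define c :: "'a fps" where "c = fps_const (1/2)"
  define W where "W = V + J * h * (2 - V * J)"
  have c2: "c * 2 = 1" using two by (simp add: c_def fps_eq_iff fps_numeral_nth)
  have V'W: "fps_X ^ (2 * m) dvd V' - c * W"
    unfolding V'_def c_def W_def by (rule fps_X_power_dvd_cutoff_diff)
  have "fps_X ^ (2 * m) dvd V\<^sup>2 * (W\<^sup>2 - 4 * h)"
    using newton_sqrt_step(1)[OF VJ Vh] by (simp add: W_def power_mult mult.commute)
  moreover have "is_unit (V\<^sup>2)" using V0 by (simp add: power2_eq_square)
  ultimately have W: "fps_X ^ (2 * m) dvd W\<^sup>2 - 4 * h" by (simp add: dvd_mult_unit_iff')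
  have "V'\<^sup>2 - h = (V' - c * W) * (V' + c * W) + c\<^sup>2 * (W\<^sup>2 - 4 * h) + ((c * 2)\<^sup>2 - 1) * h"
    by (simp add: algebra_simps power2_eq_square)
  then show "fps_X ^ (2 * m) dvd V'\<^sup>2 - h" using V'W W by (simp add: c2)
  have "V' - V = (V' - c * W) + c * (W - 2 * V)"
    by (simp add: right_diff_distrib mult.assoc[symmetric] c2)
  moreover have "fps_X ^ m dvd V' - c * W"
    using V'W by (rule fps_X_power_dvd_mono) simp
  moreover have "fps_X ^ m dvd W - 2 * V" unfolding W_def by (rule newton_sqrt_step(2)[OF VJ Vh])
  ultimately show "fps_X ^ m dvd V' - V" by (metis dvd_add dvd_mult)
qed

lemma fps_nth_0_neq_0_of_sqrt:
  fixes V h :: "'a::comm_ring_1 fps"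
  assumes "fps_X ^ m dvd V\<^sup>2 - h" "0 < m" "h $ 0 \<noteq> 0"
  shows "V $ 0 \<noteq> 0"
  using assms by (auto simp: fps_X_power_dvd_iff power2_eq_square)

section \<open>The residual of the differential equation\<close>

definition ode_residual :: "'a::comm_ring_1 poly \<Rightarrow> 'a fps \<Rightarrow> 'a fps \<Rightarrow> 'a fps" where
  "ode_residual H G S = (fps_deriv S)\<^sup>2 - G * poly_comp_fps H S"

lemma ode_sol_mod_iff:
  "ode_sol_mod \<mu> \<alpha> \<beta> H G S \<longleftrightarrow>
     S $ 0 = \<alpha> \<and> fps_deriv S $ 0 = \<beta> \<and> fps_X ^ (\<mu> - 1) dvd ode_residual H G S"
  by (simp add: ode_sol_mod_def ode_residual_def fps_cutoff_eq_iff_fps_X_power_dvd)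

lemma ode_residual_diff:
  "ode_residual H G S - ode_residual H G T =
     (fps_deriv S + fps_deriv T) * fps_deriv (S - T) - G * (poly_comp_fps H S - poly_comp_fps H T)"
  by (simp add: ode_residual_def algebra_simps power2_eq_square)

lemma ode_residual_congruent:
  fixes S T :: "'a::idom fps"
  assumes "fps_X ^ Suc n dvd S - T"
  shows "fps_X ^ n dvd ode_residual H G S - ode_residual H G T"
proof -
  have "fps_X ^ n dvd fps_deriv (S - T)" using assms by (rule fps_X_power_dvd_deriv)
  moreover have "fps_X ^ n dvd poly_comp_fps H S - poly_comp_fps H T"
    using assms poly_comp_fps_diff_dvd fps_X_power_dvd_mono by (metis dvd_trans le_SucI order_refl)
  ultimately show ?thesis unfolding ode_residual_diff by (simp add: dvd_diff dvd_mult)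
qed

lemma ode_sol_mod_unique:
  fixes S T G :: "'a::field fps"
  assumes two: "(2::'a) \<noteq> 0" and "\<beta> \<noteq> 0" and "\<mu> \<le> CHAR('a)"
    and S: "ode_sol_mod \<mu> \<alpha> \<beta> H G S" and T: "ode_sol_mod \<mu> \<alpha> \<beta> H G T"
  shows "fps_X ^ \<mu> dvd S - T"
proof -
  have "fps_X ^ k dvd S - T" if "k \<le> \<mu>" for k
    using that
  proof (induction k)
    case (Suc k)
    then have ST: "fps_X ^ k dvd S - T" by simp
    have "fps_X ^ k dvd ode_residual H G S - ode_residual H G T"
      using S T Suc.prems by (auto simp: ode_sol_mod_iff intro: dvd_diff fps_X_power_dvd_mono)
    moreover have "fps_X ^ k dvd G * (poly_comp_fps H S - poly_comp_fps H T)"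
      using dvd_trans[OF ST poly_comp_fps_diff_dvd] by (rule dvd_mult)
    ultimately have "fps_X ^ k dvd (fps_deriv S + fps_deriv T) * fps_deriv (S - T)"
      unfolding ode_residual_diff by (metis diff_add_cancel dvd_add)
    moreover have "is_unit (fps_deriv S + fps_deriv T)"
      using S T two \<open>\<beta> \<noteq> 0\<close> by (simp add: ode_sol_mod_iff flip: mult_2)
    ultimately have "fps_X ^ k dvd fps_deriv (S - T)" by (simp add: dvd_mult_unit_iff')
    moreover have "(S - T) $ 0 = 0" using S T by (simp add: ode_sol_mod_iff)
    moreover have "k < CHAR('a)" using Suc.prems \<open>\<mu> \<le> CHAR('a)\<close> by simp
    ultimately show ?case by (intro fps_X_power_Suc_dvd_of_deriv) auto
  qed simp
  then show ?thesis by simp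
qed

lemma ode_homogeneous_residual:
  fixes S V G :: "'a::field fps"
  assumes V0: "V $ 0 \<noteq> 0" and VH: "fps_X ^ Suc n dvd V\<^sup>2 - poly_comp_fps H S"
    and R: "fps_X ^ n dvd ode_residual H G S"
  shows "fps_X ^ n dvd 2 * fps_deriv S * fps_deriv V - G * poly_comp_fps (pderiv H) S * V"
proof -
  define Hs Hp where "Hs = poly_comp_fps H S" and "Hp = poly_comp_fps (pderiv H) S"
  have "V * (2 * fps_deriv S * fps_deriv V - G * Hp * V) =
      fps_deriv S * fps_deriv (V\<^sup>2 - Hs) + Hp * ode_residual H G S - G * Hp * (V\<^sup>2 - Hs)"
    by (simp add: Hs_def Hp_def ode_residual_def fps_deriv_poly_comp_fps algebra_simps power2_eq_square)
  moreover have "fps_X ^ n dvd fps_deriv (V\<^sup>2 - Hs)" using VH unfolding Hs_def by (rule fps_X_power_dvd_deriv)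
  moreover have "fps_X ^ n dvd V\<^sup>2 - Hs" using VH unfolding Hs_def by (rule fps_X_power_dvd_mono) simp
  ultimately have "fps_X ^ n dvd V * (2 * fps_deriv S * fps_deriv V - G * Hp * V)"
    using R by (simp add: dvd_add dvd_diff dvd_mult)
  then show ?thesis using V0 by (simp add: Hp_def dvd_mult_unit_iff')
qed

lemma ode_correction_identity:
  fixes D V V' I I' r c G Hs Hp U J Q \<delta> \<delta>' :: "'a::comm_ring_1"
  assumes "2 * c = 1" "\<delta> = V * I" "\<delta>' = V' * I + V * I'"
    and "I' = (G * Hs - D\<^sup>2) * (c * U * J) + r"
  shows "(D + \<delta>')\<^sup>2 - G * (Hs + Hp * \<delta> + \<delta>\<^sup>2 * Q) =
    - ((D\<^sup>2 - G * Hs) * (U * D * (V * J) - 1)) + (2 * D * V' - G * Hp * V) * I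
    + 2 * D * V * r + \<delta>'\<^sup>2 - G * \<delta>\<^sup>2 * Q"
proof -
  have "(D + \<delta>')\<^sup>2 - G * (Hs + Hp * \<delta> + \<delta>\<^sup>2 * Q) =
    - ((D\<^sup>2 - G * Hs) * (U * D * (V * J) - 1)) + (2 * D * V' - G * Hp * V) * I
    + 2 * D * V * r + \<delta>'\<^sup>2 - G * \<delta>\<^sup>2 * Q + (1 - 2 * c) * (D\<^sup>2 - G * Hs) * (U * D * (V * J))"
    by (simp add: assms(2-4) algebra_simps power2_eq_square)
  then show ?thesis using assms(1) by simp
qed

lemma ode_residual_correction:
  fixes S G U V J :: "'a::field fps"
  assumes two: "(2::'a) \<noteq> 0" and "0 < d" and K: "K \<le> 2 * d" "K < CHAR('a) \<or> CHAR('a) = 0"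
    and R: "fps_X ^ d dvd ode_residual H G S" and U: "fps_X ^ d dvd fps_deriv S * U - 1"
    and VJ: "fps_X ^ d dvd V * J - 1" and VH: "fps_X ^ d dvd V\<^sup>2 - poly_comp_fps H S"
    and V0: "V $ 0 \<noteq> 0"
  defines "\<delta> \<equiv> V * fps_integral ((G * poly_comp_fps H S - (fps_deriv S)\<^sup>2) * (fps_const (1/2) * U * J)) 0"
  shows "fps_X ^ Suc d dvd \<delta>" and "fps_X ^ K dvd ode_residual H G (S + \<delta>)"
proof -
  define D Hs Hp where "D = fps_deriv S" and "Hs = poly_comp_fps H S" and "Hp = poly_comp_fps (pderiv H) S"
  define c :: "'a fps" where "c = fps_const (1/2)"
  define f where "f = (G * Hs - D\<^sup>2) * (c * U * J)"
  define I where "I = fps_integral f 0"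
  define r where "r = fps_deriv I - f"
  have \<delta>: "\<delta> = V * I" by (simp add: \<delta>_def I_def f_def c_def D_def Hs_def)
  have "f = - ode_residual H G S * (c * U * J)" by (simp add: f_def ode_residual_def D_def Hs_def)
  then have "fps_X ^ d dvd f" using R by simp
  then have I: "fps_X ^ Suc d dvd I" unfolding I_def by (rule fps_X_power_dvd_integral)
  then show \<delta>_ord: "fps_X ^ Suc d dvd \<delta>" unfolding \<delta> by (rule dvd_mult)
  obtain Q where Q: "poly_comp_fps H (S + \<delta>) = Hs + Hp * \<delta> + \<delta>\<^sup>2 * Q"
    using poly_comp_fps_taylor2 unfolding Hs_def Hp_def by blast
  have c: "2 * c = 1" using two by (simp add: c_def fps_eq_iff fps_numeral_nth)
  have d\<delta>: "fps_deriv \<delta> = fps_deriv V * I + V * fps_deriv I" by (simp add: \<delta>)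
  have dI: "fps_deriv I = (G * Hs - D\<^sup>2) * (c * U * J) + r" by (simp add: r_def f_def)
  have "ode_residual H G (S + \<delta>) = (D + fps_deriv \<delta>)\<^sup>2 - G * (Hs + Hp * \<delta> + \<delta>\<^sup>2 * Q)"
    by (simp only: ode_residual_def Q D_def fps_deriv_add)
  also have "\<dots> = - ((D\<^sup>2 - G * Hs) * (U * D * (V * J) - 1)) + (2 * D * fps_deriv V - G * Hp * V) * I
      + 2 * D * V * r + (fps_deriv \<delta>)\<^sup>2 - G * \<delta>\<^sup>2 * Q"
    using ode_correction_identity[OF c \<delta> d\<delta> dI] .
  finally have expand: "ode_residual H G (S + \<delta>) =
      - (ode_residual H G S * (U * D * (V * J) - 1)) + (2 * D * fps_deriv V - G * Hp * V) * I
      + 2 * D * V * r + (fps_deriv \<delta>)\<^sup>2 - G * \<delta>\<^sup>2 * Q"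
    by (simp only: ode_residual_def D_def Hs_def)
  have "fps_X ^ K dvd ode_residual H G S * (U * D * (V * J) - 1)"
  proof -
    have "U * D * (V * J) - 1 = (D * U - 1) * (V * J) + (V * J - 1)" by (simp add: algebra_simps)
    also have "fps_X ^ d dvd \<dots>" by (intro dvd_add dvd_mult2) (simp_all add: D_def U VJ)
    finally show ?thesis by (rule fps_X_power_dvd_mult_mono[OF R]) (use K(1) in linarith)
  qed
  moreover have "fps_X ^ K dvd (2 * D * fps_deriv V - G * Hp * V) * I"
  proof -
    have "fps_X ^ Suc (d - 1) dvd V\<^sup>2 - poly_comp_fps H S" using VH \<open>0 < d\<close> by simp
    moreover have "fps_X ^ (d - 1) dvd ode_residual H G S" using R by (rule fps_X_power_dvd_mono) simp
    ultimately have "fps_X ^ (d - 1) dvd 2 * D * fps_deriv V - G * Hp * V"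
      unfolding D_def Hp_def by (rule ode_homogeneous_residual[OF V0])
    then show ?thesis by (rule fps_X_power_dvd_mult_mono[OF _ I]) (use K(1) \<open>0 < d\<close> in linarith)
  qed
  moreover have "fps_X ^ K dvd 2 * D * V * r"
    unfolding r_def I_def by (rule dvd_mult, rule fps_X_power_dvd_deriv_integral_diff[OF K(2)])
  moreover have "fps_X ^ K dvd (fps_deriv \<delta>)\<^sup>2"
  proof -
    have d\<delta>_ord: "fps_X ^ d dvd fps_deriv \<delta>" using \<delta>_ord by (rule fps_X_power_dvd_deriv)
    show ?thesis unfolding power2_eq_square
      by (rule fps_X_power_dvd_mult_mono[OF d\<delta>_ord d\<delta>_ord]) (use K(1) in linarith)
  qed
  moreover have "fps_X ^ K dvd G * \<delta>\<^sup>2 * Q"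
  proof -
    have "fps_X ^ K dvd \<delta>\<^sup>2" unfolding power2_eq_square
      by (rule fps_X_power_dvd_mult_mono[OF \<delta>_ord \<delta>_ord]) (use K(1) in linarith)
    then show ?thesis by (rule dvd_mult2[OF dvd_mult])
  qed
  ultimately show "fps_X ^ K dvd ode_residual H G (S + \<delta>)"
    unfolding expand by (intro dvd_add dvd_diff dvd_minus_iff[THEN iffD2])
qed

section \<open>Correctness of the algorithm\<close>

definition newton_invariant :: "nat \<Rightarrow> 'a::field \<Rightarrow> 'a \<Rightarrow> 'a poly \<Rightarrow> 'a fps \<Rightarrow> 'a alg_state \<Rightarrow> bool" where
  "newton_invariant \<mu> \<alpha> \<beta> H G st \<longleftrightarrow> (case st of (d, U, J, V, S) \<Rightarrow>
     (\<exists>m. d = 2 * m \<and> 0 < m \<and> fps_X ^ m dvd fps_deriv S * U - 1 \<and> fps_X ^ m dvd V * J - 1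
        \<and> fps_X ^ m dvd V\<^sup>2 - poly_comp_fps H S
        \<and> fps_X ^ min d (\<mu> - 1) dvd ode_residual H G S
        \<and> S $ 0 = \<alpha> \<and> fps_deriv S $ 0 = \<beta>))"

lemma newton_auxiliary_step:
  fixes D U V J h :: "'a::field fps"
  assumes two: "(2::'a) \<noteq> 0" and "0 < m" "h $ 0 \<noteq> 0"
    and DU: "fps_X ^ m dvd D * U - 1" and VJ: "fps_X ^ m dvd V * J - 1"
    and Vh: "fps_X ^ m dvd V\<^sup>2 - h"
  defines "U' \<equiv> fps_cutoff (2 * m) (U * (2 - D * U))"
    and "V' \<equiv> fps_cutoff (2 * m) (fps_const (1/2) * (V + J * h * (2 - V * J)))"
  shows "fps_X ^ (2 * m) dvd D * U' - 1"
    and "fps_X ^ (2 * m) dvd V' * fps_cutoff (2 * m) (J * (2 - V' * J)) - 1"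
    and "fps_X ^ (2 * m) dvd V'\<^sup>2 - h"
proof -
  show "fps_X ^ (2 * m) dvd D * U' - 1" unfolding U'_def by (rule newton_inverse_fps_cutoff[OF DU])
  have V0: "V $ 0 \<noteq> 0" using Vh assms(2,3) by (rule fps_nth_0_neq_0_of_sqrt)
  show "fps_X ^ (2 * m) dvd V'\<^sup>2 - h"
    unfolding V'_def by (rule newton_sqrt_fps_cutoff(1)[OF two V0 VJ Vh])
  have "fps_X ^ m dvd V' - V" unfolding V'_def by (rule newton_sqrt_fps_cutoff(2)[OF two V0 VJ Vh])
  moreover have "V' * J - 1 = (V' - V) * J + (V * J - 1)" by (simp add: algebra_simps)
  ultimately have "fps_X ^ m dvd V' * J - 1" using VJ by (metis dvd_add dvd_mult2)
  then show "fps_X ^ (2 * m) dvd V' * fps_cutoff (2 * m) (J * (2 - V' * J)) - 1"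
    by (rule newton_inverse_fps_cutoff)
qed

lemma newton_invariant_step:
  fixes G :: "'a::field fps"
  assumes two: "(2::'a) \<noteq> 0" and "\<mu> \<le> CHAR('a)" and H: "poly H \<alpha> = 1"
    and inv: "newton_invariant \<mu> \<alpha> \<beta> H G (d, U, J, V, S)" and "d < \<mu> - 1"
  shows "newton_invariant \<mu> \<alpha> \<beta> H G (alg_step \<mu> H G (d, U, J, V, S))"
proof -
  obtain m where d: "d = 2 * m" "0 < m"
    and DU: "fps_X ^ m dvd fps_deriv S * U - 1" and VJ: "fps_X ^ m dvd V * J - 1"
    and Vh: "fps_X ^ m dvd V\<^sup>2 - poly_comp_fps H S" and R: "fps_X ^ d dvd ode_residual H G S"
    and S0: "S $ 0 = \<alpha>" "fps_deriv S $ 0 = \<beta>"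
    using inv \<open>d < \<mu> - 1\<close> by (auto simp: newton_invariant_def)
  have h0: "poly_comp_fps H S $ 0 \<noteq> 0" using H S0 by (simp add: poly_comp_fps_nth_0)
  define U' where "U' = fps_cutoff d (U * (2 - fps_deriv S * U))"
  define V' where "V' = fps_cutoff d (fps_const (1/2) * (V + J * poly_comp_fps H S * (2 - V * J)))"
  define J' where "J' = fps_cutoff d (J * (2 - V' * J))"
  define \<delta> where "\<delta> = V' * fps_integral
      ((G * poly_comp_fps H S - (fps_deriv S)\<^sup>2) * (fps_const (1/2) * U' * J')) 0"
  define K where "K = min (2 * d) (\<mu> - 1)"
  define S' where "S' = fps_cutoff (Suc K) (S + \<delta>)"
  have "min (2 * d + 1) \<mu> = Suc K" using \<open>d < \<mu> - 1\<close> by (simp add: K_def)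
  then have step: "alg_step \<mu> H G (d, U, J, V, S) = (2 * d, U', J', V', S')"
    by (simp add: alg_step_def Let_def U'_def V'_def J'_def \<delta>_def S'_def)
  have DU': "fps_X ^ d dvd fps_deriv S * U' - 1" and VJ': "fps_X ^ d dvd V' * J' - 1"
    and Vh': "fps_X ^ d dvd V'\<^sup>2 - poly_comp_fps H S"
    using newton_auxiliary_step[OF two \<open>0 < m\<close> h0 DU VJ Vh]
    by (simp_all add: d U'_def V'_def J'_def)
  have "0 < d" using d by simp
  have V'0: "V' $ 0 \<noteq> 0" using Vh' \<open>0 < d\<close> h0 by (rule fps_nth_0_neq_0_of_sqrt)
  have K: "K \<le> 2 * d" "K < CHAR('a) \<or> CHAR('a) = 0"
    using \<open>\<mu> \<le> CHAR('a)\<close> \<open>d < \<mu> - 1\<close> by (auto simp: K_def)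
  have \<delta>_ord: "fps_X ^ Suc d dvd \<delta>" and R\<delta>: "fps_X ^ K dvd ode_residual H G (S + \<delta>)"
    unfolding \<delta>_def by (fact ode_residual_correction[OF two \<open>0 < d\<close> K R DU' VJ' Vh' V'0])+
  have S'_near: "fps_X ^ Suc K dvd S' - (S + \<delta>)"
    unfolding S'_def by (rule fps_X_power_dvd_cutoff_diff)
  have "fps_X ^ Suc d dvd S' - (S + \<delta>)"
    using S'_near by (rule fps_X_power_dvd_mono) (use \<open>d < \<mu> - 1\<close> d in \<open>simp add: K_def\<close>)
  from dvd_add[OF this \<delta>_ord] have S'S: "fps_X ^ Suc d dvd S' - S" by simp
  have dS'S: "fps_X ^ d dvd fps_deriv S' - fps_deriv S" using fps_X_power_dvd_deriv[OF S'S] by simp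
  from dvd_add[OF ode_residual_congruent[OF S'_near, of H G] R\<delta>]
  have "fps_X ^ K dvd ode_residual H G S'" by simp
  moreover from dvd_add[OF dvd_mult2[OF dS'S, of U'] DU']
  have "fps_X ^ d dvd fps_deriv S' * U' - 1" by (simp add: algebra_simps)
  moreover have "fps_X ^ d dvd V'\<^sup>2 - poly_comp_fps H S'"
  proof -
    have "fps_X ^ d dvd poly_comp_fps H S' - poly_comp_fps H S"
      using dvd_trans[OF S'S poly_comp_fps_diff_dvd] by (rule fps_X_power_dvd_mono) simp
    from dvd_diff[OF Vh' this] show ?thesis by simp
  qed
  moreover have "S' $ 0 = \<alpha>" "fps_deriv S' $ 0 = \<beta>"
    using S'S[unfolded fps_X_power_dvd_iff, rule_format, of 0]
      dS'S[unfolded fps_X_power_dvd_iff, rule_format, of 0] S0 \<open>0 < d\<close>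
    by simp_all
  ultimately show ?thesis
    unfolding step newton_invariant_def using VJ' \<open>0 < d\<close> by (auto simp: K_def)
qed

lemma newton_invariant_init:
  fixes \<alpha> \<beta> :: "'a::field"
  assumes two: "(2::'a) \<noteq> 0" and H: "poly H \<alpha> = 1" and \<beta>: "\<beta>\<^sup>2 = G $ 0" "\<beta> \<noteq> 0"
  shows "newton_invariant \<mu> \<alpha> \<beta> H G (alg_init \<alpha> \<beta> H G)"
proof -
  define c where "c = (fps_deriv G $ 0 + poly (pderiv H) \<alpha> * \<beta> ^ 3) / (4 * \<beta>)"
  define S where "S = fps_const \<alpha> + fps_const \<beta> * fps_X + fps_const c * fps_X ^ 2"
  have init: "alg_init \<alpha> \<beta> H G = (2, fps_const (1 / \<beta>), 1, 1, S)"
    by (simp add: alg_init_def S_def c_def)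
  have S: "S $ 0 = \<alpha>" "fps_deriv S $ 0 = \<beta>" "fps_deriv S $ 1 = 2 * c"
    by (simp_all add: S_def fps_deriv_def)
  have HS0: "poly_comp_fps H S $ 0 = 1" using H S by (simp add: poly_comp_fps_nth_0)
  have HS1: "poly_comp_fps H S $ 1 = poly (pderiv H) \<alpha> * \<beta>"
  proof -
    have "poly_comp_fps H S $ 1 = fps_deriv (poly_comp_fps H S) $ 0" by simp
    also have "\<dots> = poly (pderiv H) \<alpha> * \<beta>" using S by (simp add: fps_deriv_poly_comp_fps poly_comp_fps_nth_0)
    finally show ?thesis .
  qed
  have "(4::'a) \<noteq> 0" using two by (metis mult_2_right mult_eq_0_iff numeral_Bit0)
  then have c: "4 * \<beta> * c = G $ 1 + poly (pderiv H) \<alpha> * \<beta> ^ 3" using \<beta> by (simp add: c_def)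
  have "ode_residual H G S $ i = 0" if "i < 2" for i
  proof -
    consider "i = 0" | "i = 1" using \<open>i < 2\<close> by linarith
    then show ?thesis
    proof cases
      case 1 then show ?thesis using \<beta> S HS0 by (simp add: ode_residual_def power2_eq_square)
    next
      case 2
      have "ode_residual H G S $ 1 = 2 * \<beta> * (2 * c) - (G $ 0 * (poly (pderiv H) \<alpha> * \<beta>) + G $ 1)"
        using S(2) S(3)[unfolded One_nat_def] HS0 HS1[unfolded One_nat_def]
        by (simp add: ode_residual_def power2_eq_square fps_mult_nth del: fps_deriv_nth)
      also have "\<dots> = 0" using c \<beta>(1) by (simp add: algebra_simps power2_eq_square power3_eq_cube)
      finally show ?thesis using 2 by simp
    qed
  qed
  then have "fps_X ^ 2 dvd ode_residual H G S" unfolding fps_X_power_dvd_iff by blast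
  then have "fps_X ^ min 2 (\<mu> - 1) dvd ode_residual H G S" by (rule fps_X_power_dvd_mono) simp
  moreover have "fps_X ^ 1 dvd fps_deriv S * fps_const (1 / \<beta>) - 1"
    unfolding fps_X_power_dvd_iff using S \<beta> by simp
  moreover have "fps_X ^ 1 dvd 1\<^sup>2 - poly_comp_fps H S"
    unfolding fps_X_power_dvd_iff using HS0 by simp
  ultimately show ?thesis
    unfolding init newton_invariant_def prod.case by (intro exI[of _ 1]) (simp add: S S_def)
qed

lemma alg_ode_sol_mod:
  fixes \<alpha> \<beta> :: "'a::field" and G :: "'a fps"
  assumes two: "(2::'a) \<noteq> 0" and "\<mu> \<le> CHAR('a)" and H: "poly H \<alpha> = 1"
    and \<beta>: "\<beta>\<^sup>2 = G $ 0" "\<beta> \<noteq> 0"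
  shows "ode_sol_mod \<mu> \<alpha> \<beta> H G (alg \<mu> \<alpha> \<beta> H G)"
proof -
  let ?P = "newton_invariant \<mu> \<alpha> \<beta> H G"
  have "ode_sol_mod \<mu> \<alpha> \<beta> H G
      (snd (snd (snd (snd (while (\<lambda>st. fst st < \<mu> - 1) (alg_step \<mu> H G) (alg_init \<alpha> \<beta> H G))))))"
  proof (rule while_rule[where P = ?P and r = "measure (\<lambda>st. \<mu> - fst st)"])
    show "?P (alg_init \<alpha> \<beta> H G)" by (rule newton_invariant_init[OF two H \<beta>])
  next
    fix st assume "?P st" "fst st < \<mu> - 1"
    then show "?P (alg_step \<mu> H G st)"
      using newton_invariant_step[OF two \<open>\<mu> \<le> CHAR('a)\<close> H] by (cases st) simp
  next
    fix st assume "?P st" "\<not> fst st < \<mu> - 1"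
    then show "ode_sol_mod \<mu> \<alpha> \<beta> H G (snd (snd (snd (snd st))))"
      by (cases st) (auto simp: newton_invariant_def ode_sol_mod_iff min_absorb2)
  next
    fix st assume "?P st" "fst st < \<mu> - 1"
    then show "(alg_step \<mu> H G st, st) \<in> measure (\<lambda>st. \<mu> - fst st)"
      by (cases st) (auto simp: newton_invariant_def alg_step_def Let_def)
  qed simp
  then show ?thesis by (simp add: alg_def)
qed

theorem proposition3p1:
  fixes \<alpha> \<beta> :: "'a::{field,finite}" and G :: "'a fps" and H :: "'a poly" and \<mu> :: nat
  assumes "CHAR('a) > 3"
    and "poly H \<alpha> = 1"
    and "\<beta>\<^sup>2 = G $ 0" and "G $ 0 \<noteq> 0"
    and "1 \<le> \<mu>" and "\<mu> \<le> CHAR('a)"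
  shows "(\<exists>S. ode_sol_mod \<mu> \<alpha> \<beta> H G S) \<and>
         (\<forall>S. ode_sol_mod \<mu> \<alpha> \<beta> H G S \<longrightarrow> fps_cutoff \<mu> (alg \<mu> \<alpha> \<beta> H G) = fps_cutoff \<mu> S)"
proof -
  have two: "(2::'a) \<noteq> 0" using of_nat_neq_0_below_CHAR[of 2, where 'a='a] assms(1) by simp
  have "\<beta> \<noteq> 0" using assms(3,4) by auto
  have sol: "ode_sol_mod \<mu> \<alpha> \<beta> H G (alg \<mu> \<alpha> \<beta> H G)"
    using alg_ode_sol_mod[OF two assms(6,2,3) \<open>\<beta> \<noteq> 0\<close>] .
  then show ?thesis
    using ode_sol_mod_unique[OF two \<open>\<beta> \<noteq> 0\<close> assms(6) sol]
    by (auto simp: fps_cutoff_eq_iff_fps_X_power_dvd)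
qed

end
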